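(* Assume $\mathcal S$ and $\mathcal A$ are finite. For $\sigma>0$ let $\pi^*_\sigma$ be an optimal policy of $\mathcal M_\sigma$ (every action in $\mathrm{supp}(\pi^*_\sigma(\cdot\mid s))$ maximizes $Q^*_\sigma(s,\cdot)$, the optimal $Q$-function of $\mathcal M_\sigma$). Then for every $\epsilon>0$ there exists $\sigma'>0$ such that for all $0<\sigma<\sigma'$, all $s\in\mathcal S$ and all $a'\in\mathrm{supp}(\pi^*_\sigma(\cdot\mid s))$, $$\min_{a\in\mathrm{supp}(p_D(\cdot\mid s))}\|a'-a\|_2^2<\epsilon .$$
   Context: Setting: finite state space $\mathcal S$, finite action space $\mathcal A\subset\mathbb R^n$, discount $\gamma\in(0,1)$, reward $R(s,a)$. Dataset distribution $p_D$: action distributions $p_D(a\mid s)$ with support $\mathrm{supp}(p_D(\cdot\mid s))\subseteq\mathcal A$ (the dataset actions at $s$) and transitions $p_D(s'\mid s,a)$. A noise distribution $q_\sigma(\cdot\mid a)$ ($a\in\mathcal A$, $\sigma>0$) is a probability mass function positive on $\mathcal A$ satisfying: for all $a,a_1,a_2\in\mathcal A$, if $\|a_1-a\|_2^2>\|a_2-a\|_2^2$ then $q_\sigma(a\mid a_1)/q_\sigma(a\mid a_2)\to0$ as $\sigma\to0^+$, and if equal then the ratio $\to1$. For $\sigma>0$, $\mathcal M_\sigma=(\mathcal S,\mathcal A,R_\sigma,P_\sigma,\gamma)$ is the Noisy Action MDP with $p_D(a'\mid s,a,\sigma)=q_\sigma(a'\mid a)p_D(a\mid s)/\sum_b q_\sigma(a'\mid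 b)p_D(b\mid s)$, $P_\sigma(s'\mid s,a')=\sum_a p_D(s'\mid s,a)p_D(a'\mid s,a,\sigma)$, $R_\sigma(s,a')=\sum_a p_D(a'\mid s,a,\sigma)(R(s,a)-\|a-a'\|_2^2)$. *)

theory Defs
  imports "HOL-Analysis.Analysis"
begin

text \<open>Actions live in a finite set A of real^'n (Euclidean n-space, norm is the 2-norm).
  States form the finite type 's.
  pD s a      : dataset action distribution p_D(a | s)
  pT s a s'   : dataset transition p_D(s' | s, a)
  q sigma a' a : noise distribution q_sigma(a' | a)\<close>

definition noisy_post ::
  "(real \<Rightarrow> real^'n \<Rightarrow> real^'n \<Rightarrow> real) \<Rightarrow> ('s \<Rightarrow> real^'n \<Rightarrow> real) \<Rightarrow> (real^'n) set
   \<Rightarrow> real \<Rightarrow> 's \<Rightarrow> real^'n \<Rightarrow> real^'n \<Rightarrow> real" where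
  "noisy_post q pD A \<sigma> s a a' =
     q \<sigma> a' a * pD s a / (\<Sum>b\<in>A. q \<sigma> a' b * pD s b)"

definition noisy_P ::
  "(real \<Rightarrow> real^'n \<Rightarrow> real^'n \<Rightarrow> real) \<Rightarrow> ('s \<Rightarrow> real^'n \<Rightarrow> real)
   \<Rightarrow> ('s \<Rightarrow> real^'n \<Rightarrow> 's \<Rightarrow> real) \<Rightarrow> (real^'n) set
   \<Rightarrow> real \<Rightarrow> 's \<Rightarrow> real^'n \<Rightarrow> 's \<Rightarrow> real" where
  "noisy_P q pD pT A \<sigma> s a' s' = (\<Sum>a\<in>A. pT s a s' * noisy_post q pD A \<sigma> s a a')"

definition noisy_R ::
  "(real \<Rightarrow> real^'n \<Rightarrow> real^'n \<Rightarrow> real) \<Rightarrow> ('s \<Rightarrow> real^'n \<Rightarrow> real)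
   \<Rightarrow> ('s \<Rightarrow> real^'n \<Rightarrow> real) \<Rightarrow> (real^'n) set
   \<Rightarrow> real \<Rightarrow> 's \<Rightarrow> real^'n \<Rightarrow> real" where
  "noisy_R q pD R A \<sigma> s a' =
     (\<Sum>a\<in>A. noisy_post q pD A \<sigma> s a a' * (R s a - (norm (a - a'))\<^sup>2))"

definition is_optimal_Q ::
  "(real^'n) set \<Rightarrow> ('s::finite \<Rightarrow> real^'n \<Rightarrow> real) \<Rightarrow> ('s \<Rightarrow> real^'n \<Rightarrow> 's \<Rightarrow> real) \<Rightarrow> real
   \<Rightarrow> ('s \<Rightarrow> real^'n \<Rightarrow> real) \<Rightarrow> bool" where
  "is_optimal_Q A Rm P \<gamma> Q \<longleftrightarrow>
     (\<forall>s a. a \<in> A \<longrightarrow> Q s a = Rm s a + \<gamma> * (\<Sum>s'\<in>UNIV. P s a s' * Max (Q s' ` A))) \<and>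
     (\<forall>s a. a \<notin> A \<longrightarrow> Q s a = 0)"

definition optimal_Q ::
  "(real^'n) set \<Rightarrow> ('s::finite \<Rightarrow> real^'n \<Rightarrow> real) \<Rightarrow> ('s \<Rightarrow> real^'n \<Rightarrow> 's \<Rightarrow> real) \<Rightarrow> real
   \<Rightarrow> 's \<Rightarrow> real^'n \<Rightarrow> real" where
  "optimal_Q A Rm P \<gamma> = (THE Q. is_optimal_Q A Rm P \<gamma> Q)"

definition noisy_Qstar ::
  "(real \<Rightarrow> real^'n \<Rightarrow> real^'n \<Rightarrow> real) \<Rightarrow> ('s::finite \<Rightarrow> real^'n \<Rightarrow> real)
   \<Rightarrow> ('s \<Rightarrow> real^'n \<Rightarrow> 's \<Rightarrow> real) \<Rightarrow> ('s \<Rightarrow> real^'n \<Rightarrow> real) \<Rightarrow> (real^'n) set \<Rightarrow> real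
   \<Rightarrow> real \<Rightarrow> 's \<Rightarrow> real^'n \<Rightarrow> real" where
  "noisy_Qstar q pD pT R A \<gamma> \<sigma> =
     optimal_Q A (noisy_R q pD R A \<sigma>) (noisy_P q pD pT A \<sigma>) \<gamma>"

end

theory Submission
  imports Defs
begin

text \<open>
  Let r_\<sigma>(s, a) be the Bellman backup of a dataset action a under the optimal value function
  of the noisy MDP (\<open>data_backup\<close>), and d(s, a') the squared distance from a' to the nearest
  dataset action. Unfolding the Bellman equation of the noisy MDP shows that Q*_\<sigma>(s, a') is
  the posterior mean of r_\<sigma>(s, a) - |a - a'|^2 over the dataset actions a, hence at most
  max_a r_\<sigma>(s, a) - d(s, a'). The optimal values, and with them r_\<sigma>, are bounded
  uniformly in \<sigma>, and as \<sigma> \<rightarrow> 0 the posterior given a dataset action b concentrates on b,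
  so Q*_\<sigma>(s, b) \<ge> r_\<sigma>(s, b) - o(1). For b maximising r_\<sigma>(s, -) and a greedy action a'
  this gives d(s, a') \<le> r_\<sigma>(s, b) - Q*_\<sigma>(s, a') \<le> r_\<sigma>(s, b) - Q*_\<sigma>(s, b) = o(1).
\<close>

lemma abs_Max_image_diff_le:
  fixes f g :: "'a \<Rightarrow> real"
  assumes "finite A" "A \<noteq> {}" "\<And>a. a \<in> A \<Longrightarrow> \<bar>f a - g a\<bar> \<le> c"
  shows "\<bar>Max (f ` A) - Max (g ` A)\<bar> \<le> c"
proof -
  have "Max (f ` A) \<in> f ` A" "Max (g ` A) \<in> g ` A"
    using assms(1,2) by simp_all
  then obtain a1 a2 where a1: "a1 \<in> A" "Max (f ` A) = f a1" and a2: "a2 \<in> A" "Max (g ` A) = g a2"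
    by auto
  have "g a1 \<le> Max (g ` A)" "f a2 \<le> Max (f ` A)"
    using a1(1) a2(1) assms(1) by auto
  moreover have "\<bar>f a1 - g a1\<bar> \<le> c" "\<bar>f a2 - g a2\<bar> \<le> c"
    using assms(3) a1(1) a2(1) by blast+
  ultimately show ?thesis
    using a1(2) a2(2) by linarith
qed

lemma convex_sum_le:
  fixes w f :: "'a \<Rightarrow> real"
  assumes "\<And>i. i \<in> I \<Longrightarrow> 0 \<le> w i" "sum w I = 1"
    and "\<And>i. i \<in> I \<Longrightarrow> w i \<noteq> 0 \<Longrightarrow> f i \<le> c"
  shows "(\<Sum>i\<in>I. w i * f i) \<le> c"
proof -
  have "(\<Sum>i\<in>I. w i * f i) \<le> (\<Sum>i\<in>I. w i * c)"
    using assms(1,3) by (intro sum_mono) (metis mult_left_mono mult_zero_left order_refl)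
  also have "\<dots> = c"
    using assms(2) by (simp add: sum_distrib_right[symmetric])
  finally show ?thesis .
qed

lemma abs_convex_sum_le:
  fixes w f :: "'a \<Rightarrow> real"
  assumes "\<And>i. i \<in> I \<Longrightarrow> 0 \<le> w i" "sum w I = 1"
    and "\<And>i. i \<in> I \<Longrightarrow> w i \<noteq> 0 \<Longrightarrow> \<bar>f i\<bar> \<le> c"
  shows "\<bar>\<Sum>i\<in>I. w i * f i\<bar> \<le> c"
  using convex_sum_le[of I w f c] convex_sum_le[of I w "\<lambda>i. - f i" c] assms
  by (auto simp: sum_negf abs_le_iff)

lemma norm_diff_power2_le_diameter:
  fixes a b :: "'a::real_normed_vector"
  assumes "bounded S" "a \<in> S" "b \<in> S"
  shows "(norm (a - b))\<^sup>2 \<le> (diameter S)\<^sup>2"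
  using diameter_bounded_bound[OF assms] by (simp add: dist_norm power_mono)

lemma infnorm_le_cart:
  fixes x :: "real^'n"
  assumes "\<And>i. \<bar>x $ i\<bar> \<le> c"
  shows "infnorm x \<le> c"
  unfolding infnorm_cart using assms by (intro cSup_least) auto

locale finite_mdp =
  fixes A :: "(real^'n) set" and Rm :: "'s::finite \<Rightarrow> real^'n \<Rightarrow> real"
    and P :: "'s \<Rightarrow> real^'n \<Rightarrow> 's \<Rightarrow> real" and \<gamma> :: real
  assumes finite_actions: "finite A" and actions_nonempty: "A \<noteq> {}"
    and discount_nonneg: "0 \<le> \<gamma>" and discount_less_1: "\<gamma> < 1"
    and P_nonneg: "\<And>s a s'. a \<in> A \<Longrightarrow> 0 \<le> P s a s'"
    and sum_P: "\<And>s a. a \<in> A \<Longrightarrow> (\<Sum>s'\<in>UNIV. P s a s') = 1"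
begin

definition backup :: "real^'s \<Rightarrow> 's \<Rightarrow> real^'n \<Rightarrow> real" where
  "backup v s a = Rm s a + \<gamma> * (\<Sum>s'\<in>UNIV. P s a s' * v $ s')"

definition bellman :: "real^'s \<Rightarrow> real^'s" where
  "bellman v = (\<chi> s. Max (backup v s ` A))"

lemma abs_backup_diff_le:
  assumes "a \<in> A"
  shows "\<bar>backup v s a - backup w s a\<bar> \<le> \<gamma> * infnorm (v - w)"
proof -
  have "backup v s a - backup w s a = \<gamma> * (\<Sum>s'\<in>UNIV. P s a s' * (v - w) $ s')"
    by (simp add: backup_def algebra_simps sum_subtractf)
  moreover have "\<bar>\<Sum>s'\<in>UNIV. P s a s' * (v - w) $ s'\<bar> \<le> infnorm (v - w)"
    using assms P_nonneg sum_P component_le_infnorm_cart[of "v - w"] by (intro abs_convex_sum_le) auto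
  ultimately show ?thesis
    using discount_nonneg by (simp add: abs_mult mult_left_mono)
qed

lemma bellman_contraction: "infnorm (bellman v - bellman w) \<le> \<gamma> * infnorm (v - w)"
  by (rule infnorm_le_cart)
    (simp add: bellman_def abs_Max_image_diff_le finite_actions actions_nonempty abs_backup_diff_le)

lemma bellman_funpow_contraction:
  "infnorm ((bellman ^^ k) v - (bellman ^^ k) w) \<le> \<gamma> ^ k * infnorm (v - w)"
proof (induction k)
  case 0
  then show ?case by simp
next
  case (Suc k)
  have "infnorm ((bellman ^^ Suc k) v - (bellman ^^ Suc k) w)
      \<le> \<gamma> * infnorm ((bellman ^^ k) v - (bellman ^^ k) w)"
    using bellman_contraction by simp
  also have "\<dots> \<le> \<gamma> * (\<gamma> ^ k * infnorm (v - w))"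
    using Suc discount_nonneg by (rule mult_left_mono)
  finally show ?case by simp
qed

text \<open>The Bellman operator contracts the sup norm, not the Euclidean one; a high enough power
  of it is a Euclidean contraction, and its unique fixed point is then fixed by the operator.\<close>
lemma bellman_fixpoint_exists: "\<exists>v. bellman v = v"
proof -
  have "(\<lambda>k. \<gamma> ^ k) \<longlonglongrightarrow> 0"
    using discount_nonneg discount_less_1 by (intro LIMSEQ_power_zero) auto
  then have "\<forall>\<^sub>F k in sequentially. \<gamma> ^ k < 1 / sqrt CARD('s)"
    by (rule order_tendstoD) simp
  then obtain k where "\<gamma> ^ k < 1 / sqrt CARD('s)"
    by (auto simp: eventually_sequentially)
  then have k: "sqrt CARD('s) * \<gamma> ^ k < 1"
    by (simp add: field_simps)
  have "dist ((bellman ^^ k) v) ((bellman ^^ k) w) \<le> sqrt CARD('s) * \<gamma> ^ k * dist v w" for v w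
  proof -
    have "dist ((bellman ^^ k) v) ((bellman ^^ k) w)
        \<le> sqrt CARD('s) * infnorm ((bellman ^^ k) v - (bellman ^^ k) w)"
      using norm_le_infnorm[of "(bellman ^^ k) v - (bellman ^^ k) w"] by (simp add: dist_norm)
    also have "\<dots> \<le> sqrt CARD('s) * (\<gamma> ^ k * infnorm (v - w))"
      by (intro mult_left_mono bellman_funpow_contraction) simp
    also have "\<dots> \<le> sqrt CARD('s) * (\<gamma> ^ k * dist v w)"
      using discount_nonneg infnorm_le_norm[of "v - w"] by (simp add: dist_norm mult_left_mono)
    finally show ?thesis by simp
  qed
  then have "\<exists>!v. (bellman ^^ k) v = v"
    using k discount_nonneg by (intro banach_fix_type) auto
  then obtain v where v: "(bellman ^^ k) v = v" and unique: "\<And>w. (bellman ^^ k) w = w \<Longrightarrow> w = v"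
    by blast
  have "(bellman ^^ k) (bellman v) = bellman v"
    by (metis v funpow_swap1)
  then show ?thesis
    using unique by blast
qed

lemma bellman_fixpoint_unique:
  assumes "bellman v = v" "bellman w = w"
  shows "v = w"
proof -
  have "infnorm (v - w) \<le> \<gamma> * infnorm (v - w)"
    using bellman_contraction[of v w] assms by simp
  then have "infnorm (v - w) = 0"
    using discount_less_1 infnorm_pos_le[of "v - w"] by (simp add: mult_le_cancel_right1)
  then show ?thesis
    by (simp add: infnorm_eq_0)
qed

lemma is_optimal_Q_iff:
  "is_optimal_Q A Rm P \<gamma> Q \<longleftrightarrow>
     (\<exists>v. bellman v = v \<and> Q = (\<lambda>s a. if a \<in> A then backup v s a else 0))"
proof
  assume Q: "is_optimal_Q A Rm P \<gamma> Q"
  define v where "v = (\<chi> s. Max (Q s ` A))"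
  have backup_v: "backup v s a = Rm s a + \<gamma> * (\<Sum>s'\<in>UNIV. P s a s' * Max (Q s' ` A))" for s a
    by (simp add: backup_def v_def)
  have Q_eq: "Q s a = (if a \<in> A then backup v s a else 0)" for s a
  proof (cases "a \<in> A")
    case True
    then show ?thesis
      using Q unfolding is_optimal_Q_def backup_v by (simp only: if_True)
  next
    case False
    then show ?thesis
      using Q unfolding is_optimal_Q_def by (simp only: if_False) blast
  qed
  then have "Q s ` A = backup v s ` A" for s
    by (intro image_cong) auto
  then have "bellman v $ s = Max (Q s ` A)" for s
    by (simp add: bellman_def)
  then have "bellman v = v"
    by (simp add: v_def vec_eq_iff)
  with Q_eq show "\<exists>v. bellman v = v \<and> Q = (\<lambda>s a. if a \<in> A then backup v s a else 0)"
    by blast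
next
  assume "\<exists>v. bellman v = v \<and> Q = (\<lambda>s a. if a \<in> A then backup v s a else 0)"
  then obtain v where v: "bellman v = v" and Q: "Q = (\<lambda>s a. if a \<in> A then backup v s a else 0)"
    by blast
  have "Max (Q s ` A) = v $ s" for s
    by (subst v[symmetric]) (simp add: Q bellman_def cong: image_cong)
  then show "is_optimal_Q A Rm P \<gamma> Q"
    by (simp add: is_optimal_Q_def Q backup_def)
qed

lemma optimal_Q: "is_optimal_Q A Rm P \<gamma> (optimal_Q A Rm P \<gamma>)"
proof -
  obtain v where v: "bellman v = v"
    using bellman_fixpoint_exists by blast
  have "\<exists>!Q. is_optimal_Q A Rm P \<gamma> Q"
  proof
    show "is_optimal_Q A Rm P \<gamma> (\<lambda>s a. if a \<in> A then backup v s a else 0)"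
      unfolding is_optimal_Q_iff using v by blast
  next
    fix Q
    assume "is_optimal_Q A Rm P \<gamma> Q"
    then show "Q = (\<lambda>s a. if a \<in> A then backup v s a else 0)"
      unfolding is_optimal_Q_iff using v bellman_fixpoint_unique by blast
  qed
  then show ?thesis
    unfolding optimal_Q_def by (rule theI')
qed

lemma bellman_fixpoint_bound:
  assumes v: "bellman v = v" and Rm_bound: "\<And>s a. a \<in> A \<Longrightarrow> \<bar>Rm s a\<bar> \<le> Rb"
  shows "infnorm v \<le> Rb / (1 - \<gamma>)"
proof -
  have "\<bar>v $ s\<bar> \<le> Rb + \<gamma> * infnorm v" for s
  proof -
    have "\<bar>backup v s a - 0\<bar> \<le> Rb + \<gamma> * infnorm v" if "a \<in> A" for a
    proof -
      have "\<bar>\<Sum>s'\<in>UNIV. P s a s' * v $ s'\<bar> \<le> infnorm v"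
        using that P_nonneg sum_P component_le_infnorm_cart by (intro abs_convex_sum_le) auto
      then have "\<gamma> * \<bar>\<Sum>s'\<in>UNIV. P s a s' * v $ s'\<bar> \<le> \<gamma> * infnorm v"
        using discount_nonneg by (rule mult_left_mono)
      then show ?thesis
        using Rm_bound[OF that, of s] discount_nonneg
          abs_triangle_ineq[of "Rm s a" "\<gamma> * (\<Sum>s'\<in>UNIV. P s a s' * v $ s')"]
        by (simp add: backup_def abs_mult)
    qed
    then have "\<bar>Max (backup v s ` A) - Max ((\<lambda>_. 0) ` A)\<bar> \<le> Rb + \<gamma> * infnorm v"
      by (intro abs_Max_image_diff_le finite_actions actions_nonempty)
    then show ?thesis
      using actions_nonempty by (subst v[symmetric]) (simp add: bellman_def image_constant_conv)
  qed
  then have "infnorm v \<le> Rb + \<gamma> * infnorm v"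
    by (rule infnorm_le_cart)
  then show ?thesis
    using discount_less_1 by (simp add: field_simps)
qed

lemma abs_optimal_value_le:
  assumes "\<And>s a. a \<in> A \<Longrightarrow> \<bar>Rm s a\<bar> \<le> Rb"
  shows "\<bar>Max (optimal_Q A Rm P \<gamma> s ` A)\<bar> \<le> Rb / (1 - \<gamma>)"
proof -
  obtain v where v: "bellman v = v"
    and Q: "optimal_Q A Rm P \<gamma> = (\<lambda>s a. if a \<in> A then backup v s a else 0)"
    using optimal_Q unfolding is_optimal_Q_iff by blast
  have "Max (optimal_Q A Rm P \<gamma> s ` A) = v $ s"
    by (subst v[symmetric]) (simp add: Q bellman_def cong: image_cong)
  then show ?thesis
    using component_le_infnorm_cart[of v s] bellman_fixpoint_bound[OF v assms] by simp
qed

end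

locale noisy_action_mdp =
  fixes A :: "(real^'n) set" and pD :: "'s::finite \<Rightarrow> real^'n \<Rightarrow> real"
    and pT :: "'s \<Rightarrow> real^'n \<Rightarrow> 's \<Rightarrow> real" and R :: "'s \<Rightarrow> real^'n \<Rightarrow> real"
    and q :: "real \<Rightarrow> real^'n \<Rightarrow> real^'n \<Rightarrow> real" and \<gamma> :: real
  assumes finite_actions: "finite A" and actions_nonempty: "A \<noteq> {}"
    and discount_nonneg: "0 \<le> \<gamma>" and discount_less_1: "\<gamma> < 1"
    and pD_nonneg: "\<And>s a. 0 \<le> pD s a"
    and pD_supp: "\<And>s a. 0 < pD s a \<Longrightarrow> a \<in> A"
    and sum_pD: "\<And>s. (\<Sum>a\<in>A. pD s a) = 1"
    and pT_nonneg: "\<And>s a s'. 0 \<le> pT s a s'"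
    and sum_pT: "\<And>s a. 0 < pD s a \<Longrightarrow> (\<Sum>s'\<in>UNIV. pT s a s') = 1"
    and q_pos: "\<And>\<sigma> a a'. 0 < \<sigma> \<Longrightarrow> a \<in> A \<Longrightarrow> a' \<in> A \<Longrightarrow> 0 < q \<sigma> a' a"
    and q_ratio_tendsto_0: "\<And>a a1 a2. a \<in> A \<Longrightarrow> a1 \<in> A \<Longrightarrow> a2 \<in> A \<Longrightarrow>
      (norm (a2 - a))\<^sup>2 < (norm (a1 - a))\<^sup>2 \<Longrightarrow>
      ((\<lambda>\<sigma>. q \<sigma> a a1 / q \<sigma> a a2) \<longlongrightarrow> 0) (at_right 0)"
begin

abbreviation post :: "real \<Rightarrow> 's \<Rightarrow> real^'n \<Rightarrow> real^'n \<Rightarrow> real" where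
  "post \<equiv> noisy_post q pD A"

abbreviation Q_noisy :: "real \<Rightarrow> 's \<Rightarrow> real^'n \<Rightarrow> real" where
  "Q_noisy \<equiv> noisy_Qstar q pD pT R A \<gamma>"

definition data_actions :: "'s \<Rightarrow> (real^'n) set" where
  "data_actions s = {a. 0 < pD s a}"

lemma data_actions_subset: "data_actions s \<subseteq> A"
  using pD_supp by (auto simp: data_actions_def)

lemma finite_data_actions: "finite (data_actions s)"
  using data_actions_subset finite_actions by (rule finite_subset)

lemma data_actions_nonempty: "data_actions s \<noteq> {}"
proof
  assume "data_actions s = {}"
  then have "\<forall>a\<in>A. pD s a = 0"
    using pD_nonneg by (force simp: data_actions_def order_less_le)
  then show False
    using sum_pD[of s] by simp
qed

lemma noisy_post_denominator_pos:
  assumes "0 < \<sigma>" "a' \<in> A"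
  shows "0 < (\<Sum>b\<in>A. q \<sigma> a' b * pD s b)"
proof -
  obtain b where "b \<in> data_actions s"
    using data_actions_nonempty by blast
  then have "b \<in> A" "0 < pD s b"
    using data_actions_subset by (auto simp: data_actions_def)
  then show ?thesis
    using assms q_pos pD_nonneg finite_actions
    by (intro sum_pos2[of A b]) (auto intro!: mult_nonneg_nonneg less_imp_le[OF q_pos])
qed

lemma noisy_post_eq_0: "a \<notin> data_actions s \<Longrightarrow> post \<sigma> s a a' = 0"
  using pD_nonneg[of s a] by (simp add: data_actions_def noisy_post_def)

lemma noisy_post_nonneg:
  assumes "0 < \<sigma>" "a' \<in> A"
  shows "0 \<le> post \<sigma> s a a'"
proof (cases "a \<in> data_actions s")
  case True
  then have "a \<in> A"
    using data_actions_subset by blast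
  then show ?thesis
    using assms q_pos pD_nonneg noisy_post_denominator_pos[OF assms, of s]
    by (simp add: noisy_post_def less_imp_le)
next
  case False
  then show ?thesis
    by (simp add: noisy_post_eq_0)
qed

lemma sum_noisy_post:
  assumes "0 < \<sigma>" "a' \<in> A"
  shows "(\<Sum>a\<in>A. post \<sigma> s a a') = 1"
  using noisy_post_denominator_pos[OF assms, of s]
  by (simp add: noisy_post_def sum_divide_distrib[symmetric])

lemma noisy_post_le_likelihood_ratio:
  assumes "0 < \<sigma>" "a \<in> A" "b \<in> data_actions s"
  shows "post \<sigma> s a b \<le> q \<sigma> b a / q \<sigma> b b * (pD s a / pD s b)"
proof -
  have b: "b \<in> A" "0 < pD s b"
    using assms(3) data_actions_subset by (auto simp: data_actions_def)
  have "q \<sigma> b b * pD s b \<le> (\<Sum>c\<in>A. q \<sigma> b c * pD s c)"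
    using assms(1) b q_pos pD_nonneg finite_actions
    by (intro member_le_sum) (auto intro!: mult_nonneg_nonneg less_imp_le[OF q_pos])
  then have "post \<sigma> s a b \<le> q \<sigma> b a * pD s a / (q \<sigma> b b * pD s b)"
    unfolding noisy_post_def using assms(1,2) b q_pos pD_nonneg
    by (intro frac_le) (auto intro!: mult_nonneg_nonneg less_imp_le[OF q_pos])
  then show ?thesis
    by simp
qed

lemma noisy_post_tendsto_0:
  assumes "b \<in> data_actions s" "a \<in> A" "a \<noteq> b"
  shows "((\<lambda>\<sigma>. post \<sigma> s a b) \<longlongrightarrow> 0) (at_right 0)"
proof (rule tendsto_sandwich)
  have b: "b \<in> A"
    using assms(1) data_actions_subset by blast
  show "\<forall>\<^sub>F \<sigma> in at_right 0. 0 \<le> post \<sigma> s a b"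
    using eventually_at_right_less by (rule eventually_mono) (rule noisy_post_nonneg[OF _ b])
  show "\<forall>\<^sub>F \<sigma> in at_right 0. post \<sigma> s a b \<le> q \<sigma> b a / q \<sigma> b b * (pD s a / pD s b)"
    using eventually_at_right_less
    by (rule eventually_mono) (rule noisy_post_le_likelihood_ratio[OF _ assms(2,1)])
  have "((\<lambda>\<sigma>. q \<sigma> b a / q \<sigma> b b) \<longlongrightarrow> 0) (at_right 0)"
    using assms(2,3) b by (intro q_ratio_tendsto_0) auto
  then show "((\<lambda>\<sigma>. q \<sigma> b a / q \<sigma> b b * (pD s a / pD s b)) \<longlongrightarrow> 0) (at_right 0)"
    by (rule tendsto_mult_left_zero)
qed simp

lemma eventually_noisy_post_less:
  assumes "0 < \<eta>"
  shows "\<forall>\<^sub>F \<sigma> in at_right 0.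
    \<forall>s. \<forall>b\<in>A. \<forall>a\<in>A. b \<in> data_actions s \<longrightarrow> a \<noteq> b \<longrightarrow> post \<sigma> s a b < \<eta>"
proof (intro eventually_all_finite eventually_ball_finite[OF finite_actions] ballI)
  fix s b a
  assume "a \<in> A"
  then show "\<forall>\<^sub>F \<sigma> in at_right 0. b \<in> data_actions s \<longrightarrow> a \<noteq> b \<longrightarrow> post \<sigma> s a b < \<eta>"
    using order_tendstoD(2)[OF noisy_post_tendsto_0 assms]
    by (cases "b \<in> data_actions s \<and> a \<noteq> b") auto
qed

lemma finite_mdp_noisy:
  assumes "0 < \<sigma>"
  shows "finite_mdp A (noisy_P q pD pT A \<sigma>) \<gamma>"
proof
  fix s a' s'
  assume "a' \<in> A"
  then show "0 \<le> noisy_P q pD pT A \<sigma> s a' s'"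
    unfolding noisy_P_def using assms pT_nonneg noisy_post_nonneg
    by (intro sum_nonneg mult_nonneg_nonneg) auto
next
  fix s a'
  assume a': "a' \<in> A"
  have "(\<Sum>s'\<in>UNIV. noisy_P q pD pT A \<sigma> s a' s') = (\<Sum>a\<in>A. (\<Sum>s'\<in>UNIV. pT s a s') * post \<sigma> s a a')"
    unfolding noisy_P_def by (subst sum.swap) (simp add: sum_distrib_right)
  also have "\<dots> = (\<Sum>a\<in>A. post \<sigma> s a a')"
  proof (intro sum.cong refl)
    fix a
    show "(\<Sum>s'\<in>UNIV. pT s a s') * post \<sigma> s a a' = post \<sigma> s a a'"
      using sum_pT[of s a] noisy_post_eq_0[of a s \<sigma> a']
      by (cases "a \<in> data_actions s") (simp_all add: data_actions_def)
  qed
  finally show "(\<Sum>s'\<in>UNIV. noisy_P q pD pT A \<sigma> s a' s') = 1"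
    using sum_noisy_post[OF assms a'] by simp
qed (use finite_actions actions_nonempty discount_nonneg discount_less_1 in auto)

lemma reward_bounded: "\<exists>B. \<forall>s. \<forall>a\<in>A. \<bar>R s a\<bar> \<le> B"
proof -
  have "bounded ((\<lambda>(s, a). R s a) ` (UNIV \<times> A))"
    using finite_actions by (intro finite_imp_bounded) simp
  then show ?thesis
    unfolding bounded_real by auto
qed

lemma noisy_R_bounded: "\<exists>B. \<forall>\<sigma>>0. \<forall>s. \<forall>a'\<in>A. \<bar>noisy_R q pD R A \<sigma> s a'\<bar> \<le> B"
proof -
  obtain B where B: "\<And>s a. a \<in> A \<Longrightarrow> \<bar>R s a\<bar> \<le> B"
    using reward_bounded by blast
  have reward_penalty: "\<bar>R s a - (norm (a - a'))\<^sup>2\<bar> \<le> B + (diameter A)\<^sup>2"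
    if "a \<in> A" "a' \<in> A" for s a a'
    using B[OF that(1), of s] norm_diff_power2_le_diameter[OF finite_imp_bounded[OF finite_actions] that]
      zero_le_power2[of "norm (a - a')"] zero_le_power2[of "diameter A"]
    by (simp only: abs_le_iff) linarith
  have "\<bar>noisy_R q pD R A \<sigma> s a'\<bar> \<le> B + (diameter A)\<^sup>2" if "0 < \<sigma>" "a' \<in> A" for \<sigma> s a'
    unfolding noisy_R_def using that reward_penalty
    by (intro abs_convex_sum_le noisy_post_nonneg sum_noisy_post) auto
  then show ?thesis
    by blast
qed

definition data_backup :: "real \<Rightarrow> 's \<Rightarrow> real^'n \<Rightarrow> real" where
  "data_backup \<sigma> s a = R s a + \<gamma> * (\<Sum>s'\<in>UNIV. pT s a s' * Max (Q_noisy \<sigma> s' ` A))"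

lemma noisy_Qstar_eq_posterior_mean:
  assumes "0 < \<sigma>" "a' \<in> A"
  shows "Q_noisy \<sigma> s a' = (\<Sum>a\<in>A. post \<sigma> s a a' * (data_backup \<sigma> s a - (norm (a - a'))\<^sup>2))"
proof -
  define V where "V s' = Max (Q_noisy \<sigma> s' ` A)" for s'
  have "Q_noisy \<sigma> s a' = noisy_R q pD R A \<sigma> s a' + \<gamma> * (\<Sum>s'\<in>UNIV. noisy_P q pD pT A \<sigma> s a' s' * V s')"
    using finite_mdp.optimal_Q[OF finite_mdp_noisy[OF assms(1)]] assms(2)
    by (simp add: is_optimal_Q_def noisy_Qstar_def V_def)
  also have "(\<Sum>s'\<in>UNIV. noisy_P q pD pT A \<sigma> s a' s' * V s')
      = (\<Sum>a\<in>A. post \<sigma> s a a' * (\<Sum>s'\<in>UNIV. pT s a s' * V s'))"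
    unfolding noisy_P_def sum_distrib_left sum_distrib_right by (subst sum.swap) (simp add: mult_ac)
  finally show ?thesis
    by (simp add: noisy_R_def data_backup_def V_def algebra_simps sum_distrib_left sum.distrib[symmetric])
qed

lemma data_backup_bounded: "\<exists>K. \<forall>\<sigma>>0. \<forall>s. \<forall>a\<in>data_actions s. \<bar>data_backup \<sigma> s a\<bar> \<le> K"
proof -
  obtain B where B: "\<And>s a. a \<in> A \<Longrightarrow> \<bar>R s a\<bar> \<le> B"
    using reward_bounded by blast
  obtain B' where B': "\<And>\<sigma> s a'. 0 < \<sigma> \<Longrightarrow> a' \<in> A \<Longrightarrow> \<bar>noisy_R q pD R A \<sigma> s a'\<bar> \<le> B'"
    using noisy_R_bounded by blast
  have V: "\<bar>Max (Q_noisy \<sigma> s' ` A)\<bar> \<le> B' / (1 - \<gamma>)" if "0 < \<sigma>" for \<sigma> s'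
    unfolding noisy_Qstar_def using that B'
    by (intro finite_mdp.abs_optimal_value_le[OF finite_mdp_noisy]) auto
  have "\<bar>data_backup \<sigma> s a\<bar> \<le> B + \<gamma> * (B' / (1 - \<gamma>))"
    if "0 < \<sigma>" "a \<in> data_actions s" for \<sigma> s a
  proof -
    have a: "a \<in> A" "0 < pD s a"
      using that(2) data_actions_subset by (auto simp: data_actions_def)
    have "\<bar>\<Sum>s'\<in>UNIV. pT s a s' * Max (Q_noisy \<sigma> s' ` A)\<bar> \<le> B' / (1 - \<gamma>)"
      using pT_nonneg sum_pT[OF a(2)] V[OF that(1)] by (intro abs_convex_sum_le)
    then have "\<gamma> * \<bar>\<Sum>s'\<in>UNIV. pT s a s' * Max (Q_noisy \<sigma> s' ` A)\<bar> \<le> \<gamma> * (B' / (1 - \<gamma>))"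
      using discount_nonneg by (rule mult_left_mono)
    then show ?thesis
      using B[OF a(1), of s] discount_nonneg
        abs_triangle_ineq[of "R s a" "\<gamma> * (\<Sum>s'\<in>UNIV. pT s a s' * Max (Q_noisy \<sigma> s' ` A))"]
      by (simp add: data_backup_def abs_mult)
  qed
  then show ?thesis
    by blast
qed

lemma data_backup_gap_bounded:
  "\<exists>C\<ge>0. \<forall>\<sigma>>0. \<forall>s. \<forall>a\<in>data_actions s. \<forall>b\<in>data_actions s.
     data_backup \<sigma> s b - data_backup \<sigma> s a + (norm (a - b))\<^sup>2 \<le> C"
proof -
  obtain K where K: "\<And>\<sigma> s a. 0 < \<sigma> \<Longrightarrow> a \<in> data_actions s \<Longrightarrow> \<bar>data_backup \<sigma> s a\<bar> \<le> K"
    using data_backup_bounded by blast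
  have "data_backup \<sigma> s b - data_backup \<sigma> s a + (norm (a - b))\<^sup>2 \<le> 2 * \<bar>K\<bar> + (diameter A)\<^sup>2"
    if "0 < \<sigma>" "a \<in> data_actions s" "b \<in> data_actions s" for \<sigma> s a b
  proof -
    have "(norm (a - b))\<^sup>2 \<le> (diameter A)\<^sup>2"
      using that(2,3) data_actions_subset finite_actions
      by (intro norm_diff_power2_le_diameter finite_imp_bounded) auto
    then show ?thesis
      using K[OF that(1,2)] K[OF that(1,3)] by (simp add: abs_le_iff)
  qed
  then show ?thesis
    by (intro exI[of _ "2 * \<bar>K\<bar> + (diameter A)\<^sup>2"]) auto
qed

lemma noisy_Qstar_le:
  assumes "0 < \<sigma>" "a' \<in> A"
  shows "Q_noisy \<sigma> s a'
    \<le> Max (data_backup \<sigma> s ` data_actions s) - Min ((\<lambda>a. (norm (a' - a))\<^sup>2) ` data_actions s)"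
  unfolding noisy_Qstar_eq_posterior_mean[OF assms]
proof (intro convex_sum_le noisy_post_nonneg sum_noisy_post assms)
  fix a
  assume "post \<sigma> s a a' \<noteq> 0"
  then have "a \<in> data_actions s"
    using noisy_post_eq_0 by blast
  then show "data_backup \<sigma> s a - (norm (a - a'))\<^sup>2
    \<le> Max (data_backup \<sigma> s ` data_actions s) - Min ((\<lambda>a. (norm (a' - a))\<^sup>2) ` data_actions s)"
    using finite_data_actions by (intro diff_mono) (auto simp: norm_minus_commute)
qed

lemma noisy_Qstar_ge:
  assumes "0 < \<sigma>" "b \<in> data_actions s" "0 \<le> \<eta>"
    and post_small: "\<And>a. a \<in> A \<Longrightarrow> a \<noteq> b \<Longrightarrow> post \<sigma> s a b \<le> \<eta>"
    and gap: "\<And>a. a \<in> data_actions s \<Longrightarrow> data_backup \<sigma> s b - data_backup \<sigma> s a + (norm (a - b))\<^sup>2 \<le> C"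
  shows "data_backup \<sigma> s b - real (card A) * \<eta> * C \<le> Q_noisy \<sigma> s b"
proof -
  have b: "b \<in> A"
    using assms(2) data_actions_subset by blast
  have C: "0 \<le> C"
    using gap[OF assms(2)] by simp
  have "data_backup \<sigma> s b - Q_noisy \<sigma> s b
      = (\<Sum>a\<in>A. post \<sigma> s a b * data_backup \<sigma> s b) - Q_noisy \<sigma> s b"
    using sum_noisy_post[OF assms(1) b, of s] by (simp add: sum_distrib_right[symmetric])
  also have "\<dots>
      = (\<Sum>a\<in>A. post \<sigma> s a b * (data_backup \<sigma> s b - data_backup \<sigma> s a + (norm (a - b))\<^sup>2))"
    by (simp add: noisy_Qstar_eq_posterior_mean[OF assms(1) b] sum_subtractf[symmetric] algebra_simps)
  also have "\<dots> \<le> (\<Sum>a\<in>A. \<eta> * C)"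
  proof (rule sum_mono)
    fix a
    assume a: "a \<in> A"
    show "post \<sigma> s a b * (data_backup \<sigma> s b - data_backup \<sigma> s a + (norm (a - b))\<^sup>2) \<le> \<eta> * C"
    proof (cases "a \<in> data_actions s \<and> a \<noteq> b")
      case True
      then have "post \<sigma> s a b * (data_backup \<sigma> s b - data_backup \<sigma> s a + (norm (a - b))\<^sup>2)
          \<le> post \<sigma> s a b * C"
        using gap noisy_post_nonneg[OF assms(1) b] by (intro mult_left_mono) auto
      also have "\<dots> \<le> \<eta> * C"
        using post_small[OF a] True C by (intro mult_right_mono) auto
      finally show ?thesis .
    next
      case False
      then show ?thesis
        using noisy_post_eq_0 assms(3) C by auto
    qed
  qed
  finally show ?thesis
    by simp
qed

lemma greedy_actions_near_data:
  assumes "0 < \<epsilon>"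
  shows "\<exists>\<sigma>'>0. \<forall>\<sigma> s a'. 0 < \<sigma> \<longrightarrow> \<sigma> < \<sigma>' \<longrightarrow> a' \<in> A \<longrightarrow>
    (\<forall>b\<in>A. Q_noisy \<sigma> s b \<le> Q_noisy \<sigma> s a') \<longrightarrow>
    Min ((\<lambda>a. (norm (a' - a))\<^sup>2) ` data_actions s) < \<epsilon>"
proof -
  obtain C where C: "0 \<le> C" and gap: "\<And>\<sigma> s a b. 0 < \<sigma> \<Longrightarrow> a \<in> data_actions s \<Longrightarrow>
      b \<in> data_actions s \<Longrightarrow> data_backup \<sigma> s b - data_backup \<sigma> s a + (norm (a - b))\<^sup>2 \<le> C"
    using data_backup_gap_bounded by blast
  define \<eta> where "\<eta> = \<epsilon> / (real (card A) * C + 1)"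
  have "0 < real (card A) * C + 1"
    using C by (simp add: add_nonneg_pos)
  then have \<eta>: "0 < \<eta>" "real (card A) * \<eta> * C < \<epsilon>"
    using assms by (simp_all add: \<eta>_def field_simps)
  obtain \<sigma>' where "0 < \<sigma>'" and post_small: "\<And>\<sigma> s b a. 0 < \<sigma> \<Longrightarrow> \<sigma> < \<sigma>' \<Longrightarrow>
      b \<in> A \<Longrightarrow> a \<in> A \<Longrightarrow> b \<in> data_actions s \<Longrightarrow> a \<noteq> b \<Longrightarrow> post \<sigma> s a b < \<eta>"
    using eventually_noisy_post_less[OF \<eta>(1)] unfolding eventually_at_right_field by blast
  have "Min ((\<lambda>a. (norm (a' - a))\<^sup>2) ` data_actions s) < \<epsilon>"
    if \<sigma>: "0 < \<sigma>" "\<sigma> < \<sigma>'" and a': "a' \<in> A" and greedy: "\<forall>b\<in>A. Q_noisy \<sigma> s b \<le> Q_noisy \<sigma> s a'"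
    for \<sigma> s a'
  proof -
    have "Max (data_backup \<sigma> s ` data_actions s) \<in> data_backup \<sigma> s ` data_actions s"
      using finite_data_actions data_actions_nonempty by simp
    then obtain b where b: "b \<in> data_actions s" "data_backup \<sigma> s b = Max (data_backup \<sigma> s ` data_actions s)"
      by (metis imageE)
    then have "b \<in> A"
      using data_actions_subset by blast
    have "data_backup \<sigma> s b - real (card A) * \<eta> * C \<le> Q_noisy \<sigma> s b"
      using \<sigma> b(1) \<eta>(1) \<open>b \<in> A\<close> by (intro noisy_Qstar_ge gap less_imp_le post_small) auto
    also have "\<dots> \<le> Q_noisy \<sigma> s a'"
      using greedy \<open>b \<in> A\<close> by blast
    also have "\<dots> \<le> data_backup \<sigma> s b - Min ((\<lambda>a. (norm (a' - a))\<^sup>2) ` data_actions s)"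
      using noisy_Qstar_le[OF \<sigma>(1) a'] b(2) by simp
    finally show ?thesis
      using \<eta>(2) by simp
  qed
  with \<open>0 < \<sigma>'\<close> show ?thesis
    by blast
qed

end

theorem mainTheorem7:
  fixes A :: "(real^'n) set"
    and pD :: "'s::finite \<Rightarrow> real^'n \<Rightarrow> real"
    and pT :: "'s \<Rightarrow> real^'n \<Rightarrow> 's \<Rightarrow> real"
    and R :: "'s \<Rightarrow> real^'n \<Rightarrow> real"
    and q :: "real \<Rightarrow> real^'n \<Rightarrow> real^'n \<Rightarrow> real"
    and \<gamma> :: real
    and \<pi> :: "real \<Rightarrow> 's \<Rightarrow> real^'n \<Rightarrow> real"
  assumes finA: "finite A" and neA: "A \<noteq> {}"
    and gamma: "0 < \<gamma>" "\<gamma> < 1"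
    and pD_nonneg: "\<And>s a. pD s a \<ge> 0"
    and pD_supp: "\<And>s a. pD s a > 0 \<Longrightarrow> a \<in> A"
    and pD_sum: "\<And>s. (\<Sum>a\<in>A. pD s a) = 1"
    and pT_nonneg: "\<And>s a s'. pT s a s' \<ge> 0"
    and pT_sum: "\<And>s a. pD s a > 0 \<Longrightarrow> (\<Sum>s'\<in>UNIV. pT s a s') = 1"
    and q_pos: "\<And>\<sigma> a a'. \<sigma> > 0 \<Longrightarrow> a \<in> A \<Longrightarrow> a' \<in> A \<Longrightarrow> q \<sigma> a' a > 0"
    and q_zero: "\<And>\<sigma> a a'. \<sigma> > 0 \<Longrightarrow> a \<in> A \<Longrightarrow> a' \<notin> A \<Longrightarrow> q \<sigma> a' a = 0"
    and q_sum: "\<And>\<sigma> a. \<sigma> > 0 \<Longrightarrow> a \<in> A \<Longrightarrow> (\<Sum>a'\<in>A. q \<sigma> a' a) = 1"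
    and q_lt: "\<And>a a1 a2. a \<in> A \<Longrightarrow> a1 \<in> A \<Longrightarrow> a2 \<in> A \<Longrightarrow>
                 (norm (a1 - a))\<^sup>2 > (norm (a2 - a))\<^sup>2 \<Longrightarrow>
                 ((\<lambda>\<sigma>. q \<sigma> a a1 / q \<sigma> a a2) \<longlongrightarrow> 0) (at_right 0)"
    and q_eq: "\<And>a a1 a2. a \<in> A \<Longrightarrow> a1 \<in> A \<Longrightarrow> a2 \<in> A \<Longrightarrow>
                 (norm (a1 - a))\<^sup>2 = (norm (a2 - a))\<^sup>2 \<Longrightarrow>
                 ((\<lambda>\<sigma>. q \<sigma> a a1 / q \<sigma> a a2) \<longlongrightarrow> 1) (at_right 0)"
    and pi_nonneg: "\<And>\<sigma> s a. \<sigma> > 0 \<Longrightarrow> \<pi> \<sigma> s a \<ge> 0"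
    and pi_supp: "\<And>\<sigma> s a. \<sigma> > 0 \<Longrightarrow> \<pi> \<sigma> s a > 0 \<Longrightarrow> a \<in> A"
    and pi_sum: "\<And>\<sigma> s. \<sigma> > 0 \<Longrightarrow> (\<Sum>a\<in>A. \<pi> \<sigma> s a) = 1"
    and pi_opt: "\<And>\<sigma> s a' b. \<sigma> > 0 \<Longrightarrow> \<pi> \<sigma> s a' > 0 \<Longrightarrow> b \<in> A \<Longrightarrow>
                 noisy_Qstar q pD pT R A \<gamma> \<sigma> s b \<le> noisy_Qstar q pD pT R A \<gamma> \<sigma> s a'"
  shows "\<forall>\<epsilon>>0. \<exists>\<sigma>'>0. \<forall>\<sigma>. 0 < \<sigma> \<and> \<sigma> < \<sigma>' \<longrightarrow>
           (\<forall>s a'. \<pi> \<sigma> s a' > 0 \<longrightarrow>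
              Min ((\<lambda>a. (norm (a' - a))\<^sup>2) ` {a. pD s a > 0}) < \<epsilon>)"
proof -
  interpret noisy_action_mdp A pD pT R q \<gamma>
    using gamma neA
    by unfold_locales (auto intro: finA pD_nonneg pD_supp pD_sum pT_nonneg pT_sum q_pos q_lt)
  show ?thesis
  proof (intro allI impI)
    fix \<epsilon> :: real
    assume "0 < \<epsilon>"
    then obtain \<sigma>' where "0 < \<sigma>'" and "\<forall>\<sigma> s a'. 0 < \<sigma> \<longrightarrow> \<sigma> < \<sigma>' \<longrightarrow> a' \<in> A \<longrightarrow>
        (\<forall>b\<in>A. noisy_Qstar q pD pT R A \<gamma> \<sigma> s b \<le> noisy_Qstar q pD pT R A \<gamma> \<sigma> s a') \<longrightarrow>
        Min ((\<lambda>a. (norm (a' - a))\<^sup>2) ` data_actions s) < \<epsilon>"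
      using greedy_actions_near_data by blast
    then show "\<exists>\<sigma>'>0. \<forall>\<sigma>. 0 < \<sigma> \<and> \<sigma> < \<sigma>' \<longrightarrow>
        (\<forall>s a'. \<pi> \<sigma> s a' > 0 \<longrightarrow> Min ((\<lambda>a. (norm (a' - a))\<^sup>2) ` {a. pD s a > 0}) < \<epsilon>)"
      using pi_supp pi_opt unfolding data_actions_def by blast
  qed
qed

end
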